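(* Let $R$ be a ring, let $d_{0}:X_{0}\to X_{1}$ be a homomorphism of right $R$-modules with kernel $K$, and let $\zeta:Q_{0}\to Q_{1}$ be a homomorphism between injective right $R$-modules $Q_0,Q_1$. Then $K\in\mathcal{B}_{\zeta}$ if and only if for every homomorphism $f\in\mathrm{Hom}_{R}(X_{0},Q_{1})$ there exist homomorphisms $s_{0}:X_{0}\to Q_{0}$ and $s_{1}:X_{1}\to Q_{1}$ such that $f=s_{1}d_{0}+\zeta s_{0}$.
   Context: $R$ is a unital associative ring and modules are right $R$-modules. For a homomorphism $\zeta:Q_0\to Q_1$, $\mathcal{B}_{\zeta}=\{X\in\mathrm{Mod}(R)\mid \mathrm{Hom}_R(X,\zeta):\mathrm{Hom}_R(X,Q_0)\to\mathrm{Hom}_R(X,Q_1)\text{ is an epimorphism}\}$. *)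

theory Defs
  imports "HOL-Algebra.Module"
begin

text \<open>Right R-modules over an arbitrary (not necessarily commutative) unital ring R.
  The field smult of the HOL-Algebra module record is used with the reading
  smult r x = x r (right scalar action).\<close>

definition right_module :: "('r, 'e) ring_scheme \<Rightarrow> ('r, 'a, 'm) module_scheme \<Rightarrow> bool" where
  "right_module R M \<longleftrightarrow> ring R \<and> abelian_group M \<and>
     (\<forall>r\<in>carrier R. \<forall>x\<in>carrier M. smult M r x \<in> carrier M) \<and>
     (\<forall>r\<in>carrier R. \<forall>x\<in>carrier M. \<forall>y\<in>carrier M.
        smult M r (x \<oplus>\<^bsub>M\<^esub> y) = smult M r x \<oplus>\<^bsub>M\<^esub> smult M r y) \<and>
     (\<forall>r\<in>carrier R. \<forall>s\<in>carrier R. \<forall>x\<in>carrier M.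
        smult M (r \<oplus>\<^bsub>R\<^esub> s) x = smult M r x \<oplus>\<^bsub>M\<^esub> smult M s x) \<and>
     (\<forall>r\<in>carrier R. \<forall>s\<in>carrier R. \<forall>x\<in>carrier M.
        smult M (r \<otimes>\<^bsub>R\<^esub> s) x = smult M s (smult M r x)) \<and>
     (\<forall>x\<in>carrier M. smult M \<one>\<^bsub>R\<^esub> x = x)"

definition rhom :: "('r, 'e) ring_scheme \<Rightarrow> ('r, 'a, 'm) module_scheme \<Rightarrow> ('r, 'b, 'n) module_scheme
    \<Rightarrow> ('a \<Rightarrow> 'b) set" where
  "rhom R M N = {f. f \<in> carrier M \<rightarrow> carrier N \<and>
     (\<forall>x\<in>carrier M. \<forall>y\<in>carrier M. f (x \<oplus>\<^bsub>M\<^esub> y) = f x \<oplus>\<^bsub>N\<^esub> f y) \<and>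
     (\<forall>r\<in>carrier R. \<forall>x\<in>carrier M. f (smult M r x) = smult N r (f x))}"

definition rker_module :: "('r, 'a, 'm) module_scheme \<Rightarrow> ('r, 'b, 'n) module_scheme
    \<Rightarrow> ('a \<Rightarrow> 'b) \<Rightarrow> ('r, 'a, 'm) module_scheme" where
  "rker_module X0 X1 d = X0\<lparr>carrier := {x \<in> carrier X0. d x = \<zero>\<^bsub>X1\<^esub>}\<rparr>"

text \<open>Injectivity of Q, tested against all right R-modules whose elements live in the type 'x
  (HOL cannot quantify over all types inside a formula).\<close>
definition injective_rmodule :: "('r, 'e) ring_scheme \<Rightarrow> ('r, 'q, 'm) module_scheme \<Rightarrow> 'x itself \<Rightarrow> bool" where
  "injective_rmodule R Q (T :: 'x itself) \<longleftrightarrow> right_module R Q \<and>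
     (\<forall>(A :: ('r, 'x) module) (B :: ('r, 'x) module) i g.
        right_module R A \<longrightarrow> right_module R B \<longrightarrow> i \<in> rhom R A B \<longrightarrow> inj_on i (carrier A) \<longrightarrow>
        g \<in> rhom R A Q \<longrightarrow> (\<exists>h \<in> rhom R B Q. \<forall>a\<in>carrier A. h (i a) = g a))"

definition in_B :: "('r, 'e) ring_scheme \<Rightarrow> ('r, 'c, 'm) module_scheme \<Rightarrow> ('r, 'd, 'n) module_scheme
    \<Rightarrow> ('c \<Rightarrow> 'd) \<Rightarrow> ('r, 'a, 'k) module_scheme \<Rightarrow> bool" where
  "in_B R Q0 Q1 zeta X \<longleftrightarrow>
     (\<forall>g \<in> rhom R X Q1. \<exists>t \<in> rhom R X Q0. \<forall>x\<in>carrier X. zeta (t x) = g x)"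

end

theory Submission
  imports Defs "HOL-Algebra.AbelCoset"
begin

text \<open>If K is in B_zeta, a map f : X0 \<rightarrow> Q1 restricted to K lifts through zeta to K \<rightarrow> Q0,
  which extends to s0 on X0 by injectivity of Q0. Then f - zeta s0 vanishes on K, so it factors
  through the image of d0, and injectivity of Q1 extends the factor to s1 on X1.
  Conversely, a map K \<rightarrow> Q1 extends to X0 by injectivity of Q1; decomposing the extension as
  s1 d0 + zeta s0 and restricting to K, where d0 vanishes, exhibits s0 as the required lift.\<close>

lemma right_module_abelian_group: "right_module R M \<Longrightarrow> abelian_group M"
  by (simp add: right_module_def)

lemma additive_map_abelian_group_hom:
  assumes "abelian_group M" "abelian_group N" "f \<in> carrier M \<rightarrow> carrier N"
    "\<And>x y. x \<in> carrier M \<Longrightarrow> y \<in> carrier M \<Longrightarrow> f (x \<oplus>\<^bsub>M\<^esub> y) = f x \<oplus>\<^bsub>N\<^esub> f y"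
  shows "abelian_group_hom M N f"
proof -
  interpret M: abelian_group M by fact
  interpret N: abelian_group N by fact
  show ?thesis
    by (intro abelian_group_homI assms group_hom.intro group_hom_axioms.intro
        M.a_group N.a_group) (auto simp: hom_def assms)
qed

lemma rhom_abelian_group_hom:
  "right_module R M \<Longrightarrow> right_module R N \<Longrightarrow> f \<in> rhom R M N \<Longrightarrow> abelian_group_hom M N f"
  by (rule additive_map_abelian_group_hom) (auto simp: right_module_abelian_group rhom_def)

lemma smult_abelian_group_hom:
  "right_module R M \<Longrightarrow> r \<in> carrier R \<Longrightarrow> abelian_group_hom M M (smult M r)"
  by (rule additive_map_abelian_group_hom) (auto simp: right_module_def)

lemma right_module_smult_closed:
  "right_module R M \<Longrightarrow> r \<in> carrier R \<Longrightarrow> x \<in> carrier M \<Longrightarrow> smult M r x \<in> carrier M"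
  by (simp add: right_module_def)

lemma rhom_closed: "f \<in> rhom R M N \<Longrightarrow> x \<in> carrier M \<Longrightarrow> f x \<in> carrier N"
  by (auto simp: rhom_def)

lemma rhom_comp: "f \<in> rhom R M N \<Longrightarrow> g \<in> rhom R N P \<Longrightarrow> (\<lambda>x. g (f x)) \<in> rhom R M P"
  unfolding rhom_def by (auto simp: Pi_def)

lemma rhom_diff:
  assumes M: "right_module R M" and N: "right_module R N"
    and f: "f \<in> rhom R M N" and g: "g \<in> rhom R M N"
  shows "(\<lambda>x. f x \<ominus>\<^bsub>N\<^esub> g x) \<in> rhom R M N"
proof -
  interpret N: abelian_group N by (rule right_module_abelian_group[OF N])
  have "smult N r (f x \<ominus>\<^bsub>N\<^esub> g x) = smult N r (f x) \<ominus>\<^bsub>N\<^esub> smult N r (g x)"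
    if "r \<in> carrier R" "x \<in> carrier M" for r x
  proof -
    interpret r: abelian_group_hom N N "smult N r" by (rule smult_abelian_group_hom[OF N that(1)])
    show ?thesis using f g that(2) by (simp add: N.minus_eq rhom_closed)
  qed
  then show ?thesis
    using f g by (auto simp: rhom_def N.minus_eq N.minus_add N.a_ac Pi_def)
qed

lemma rhom_restrict: "H \<subseteq> carrier M \<Longrightarrow> f \<in> rhom R M N \<Longrightarrow> f \<in> rhom R (M\<lparr>carrier := H\<rparr>) N"
  by (auto simp: rhom_def subset_iff)

lemma right_submodule:
  assumes M: "right_module R M" and H: "H \<subseteq> carrier M" and zero: "\<zero>\<^bsub>M\<^esub> \<in> H"
    and add: "\<And>x y. x \<in> H \<Longrightarrow> y \<in> H \<Longrightarrow> x \<oplus>\<^bsub>M\<^esub> y \<in> H"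
    and neg: "\<And>x. x \<in> H \<Longrightarrow> \<ominus>\<^bsub>M\<^esub> x \<in> H"
    and smult: "\<And>r x. r \<in> carrier R \<Longrightarrow> x \<in> H \<Longrightarrow> smult M r x \<in> H"
  shows "right_module R (M\<lparr>carrier := H\<rparr>)"
proof -
  interpret M: abelian_group M by (rule right_module_abelian_group[OF M])
  have "abelian_group (M\<lparr>carrier := H\<rparr>)"
  proof (rule abelian_groupI, goal_cases)
    case (6 x)
    then show ?case using H neg by (intro bexI[of _ "\<ominus>\<^bsub>M\<^esub> x"]) (auto intro: M.l_neg)
  qed (use H zero add in \<open>auto intro: M.a_assoc M.a_comm\<close>)
  then show ?thesis using M H smult unfolding right_module_def by (auto simp: subset_iff)
qed

lemma kernel_right_module:
  assumes M: "right_module R M" and N: "right_module R N" and d: "d \<in> rhom R M N"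
  shows "right_module R (rker_module M N d)"
proof -
  interpret d: abelian_group_hom M N d by (rule rhom_abelian_group_hom[OF M N d])
  have "d (smult M r x) = \<zero>\<^bsub>N\<^esub>" if "r \<in> carrier R" "x \<in> carrier M" "d x = \<zero>\<^bsub>N\<^esub>" for r x
  proof -
    interpret r: abelian_group_hom N N "smult N r" by (rule smult_abelian_group_hom[OF N that(1)])
    show ?thesis using d that by (simp add: rhom_def)
  qed
  then show ?thesis unfolding rker_module_def
    by (intro right_submodule[OF M]) (auto simp: right_module_smult_closed[OF M])
qed

lemma image_right_module:
  assumes M: "right_module R M" and N: "right_module R N" and d: "d \<in> rhom R M N"
  shows "right_module R (N\<lparr>carrier := d ` carrier M\<rparr>)"
proof -
  interpret d: abelian_group_hom M N d by (rule rhom_abelian_group_hom[OF M N d])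
  have "smult N r (d x) \<in> d ` carrier M" if "r \<in> carrier R" "x \<in> carrier M" for r x
  proof -
    have "smult N r (d x) = d (smult M r x)" using d that by (simp add: rhom_def)
    then show ?thesis using right_module_smult_closed[OF M that] by simp
  qed
  then show ?thesis
    by (intro right_submodule[OF N])
       (auto simp flip: d.hom_add d.hom_a_inv d.hom_zero)
qed

lemma rhom_factors_through_image:
  assumes M: "right_module R M" and N: "right_module R N" and P: "right_module R P"
    and d: "d \<in> rhom R M N" and phi: "\<phi> \<in> rhom R M P"
    and vanish: "\<And>x. x \<in> carrier M \<Longrightarrow> d x = \<zero>\<^bsub>N\<^esub> \<Longrightarrow> \<phi> x = \<zero>\<^bsub>P\<^esub>"
  shows "\<exists>h \<in> rhom R (N\<lparr>carrier := d ` carrier M\<rparr>) P. \<forall>x \<in> carrier M. h (d x) = \<phi> x"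
proof -
  interpret d: abelian_group_hom M N d by (rule rhom_abelian_group_hom[OF M N d])
  interpret \<phi>: abelian_group_hom M P \<phi> by (rule rhom_abelian_group_hom[OF M P phi])
  have well_defined: "\<phi> x = \<phi> y" if "x \<in> carrier M" "y \<in> carrier M" "d x = d y" for x y
  proof -
    have "\<phi> (x \<ominus>\<^bsub>M\<^esub> y) = \<zero>\<^bsub>P\<^esub>"
      using that by (intro vanish) (simp_all add: d.G.minus_eq d.H.r_neg)
    then have "\<phi> x \<oplus>\<^bsub>P\<^esub> \<ominus>\<^bsub>P\<^esub> \<phi> y = \<zero>\<^bsub>P\<^esub>" using that by (simp add: d.G.minus_eq)
    then show ?thesis using that
      by (metis \<phi>.H.a_inv_closed \<phi>.H.minus_equality \<phi>.H.minus_minus \<phi>.hom_closed)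
  qed
  define h where "h y = \<phi> (SOME x. x \<in> carrier M \<and> d x = y)" for y
  have h_d: "h (d x) = \<phi> x" if "x \<in> carrier M" for x
  proof -
    have "\<exists>x'. x' \<in> carrier M \<and> d x' = d x" using that by blast
    from someI_ex[OF this] show ?thesis unfolding h_def using well_defined that by blast
  qed
  have h_smult: "h (smult N r (d x)) = smult P r (\<phi> x)" if "r \<in> carrier R" "x \<in> carrier M" for r x
  proof -
    have "smult N r (d x) = d (smult M r x)" using d that by (simp add: rhom_def)
    then show ?thesis using phi that by (simp add: h_d right_module_smult_closed[OF M] rhom_def)
  qed
  have "h \<in> rhom R (N\<lparr>carrier := d ` carrier M\<rparr>) P"
    by (auto simp: rhom_def h_d h_smult simp flip: d.hom_add)
  with h_d show ?thesis by blast
qed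

lemma injective_rmodule_right_module: "injective_rmodule R Q T \<Longrightarrow> right_module R Q"
  by (simp add: injective_rmodule_def)

lemma injective_rmodule_extend:
  fixes M :: "('r, 'x) module"
  assumes Q: "injective_rmodule R Q TYPE('x)" and M: "right_module R M"
    and H: "right_module R (M\<lparr>carrier := H\<rparr>)" "H \<subseteq> carrier M"
    and g: "g \<in> rhom R (M\<lparr>carrier := H\<rparr>) Q"
  shows "\<exists>h \<in> rhom R M Q. \<forall>x \<in> H. h x = g x"
proof -
  have "(\<lambda>x. x) \<in> rhom R (M\<lparr>carrier := H\<rparr>) M" using H(2) by (auto simp: rhom_def)
  then show ?thesis using Q M H g unfolding injective_rmodule_def by fastforce
qed

lemma decomposition_if_kernel_in_B:
  fixes X0 :: "('r, 'a) module" and X1 :: "('r, 'b) module"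
  assumes X0: "right_module R X0" and X1: "right_module R X1" and d0: "d0 \<in> rhom R X0 X1"
    and Q0: "injective_rmodule R Q0 TYPE('a)" and Q1: "injective_rmodule R Q1 TYPE('b)"
    and zeta: "zeta \<in> rhom R Q0 Q1"
    and K: "in_B R Q0 Q1 zeta (rker_module X0 X1 d0)"
    and f: "f \<in> rhom R X0 Q1"
  shows "\<exists>s0 \<in> rhom R X0 Q0. \<exists>s1 \<in> rhom R X1 Q1.
    \<forall>x \<in> carrier X0. f x = s1 (d0 x) \<oplus>\<^bsub>Q1\<^esub> zeta (s0 x)"
proof -
  have Q1_module: "right_module R Q1" by (rule injective_rmodule_right_module[OF Q1])
  interpret Q1: abelian_group Q1 by (rule right_module_abelian_group[OF Q1_module])
  define ker where "ker = {x \<in> carrier X0. d0 x = \<zero>\<^bsub>X1\<^esub>}"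
  have ker_module: "right_module R (X0\<lparr>carrier := ker\<rparr>)"
    using kernel_right_module[OF X0 X1 d0] by (simp add: rker_module_def ker_def)
  obtain t where t: "t \<in> rhom R (X0\<lparr>carrier := ker\<rparr>) Q0" and "\<forall>x \<in> ker. zeta (t x) = f x"
    using K rhom_restrict[OF _ f, of ker] by (auto simp: in_B_def rker_module_def ker_def)
  moreover obtain s0 where s0: "s0 \<in> rhom R X0 Q0" and "\<forall>x \<in> ker. s0 x = t x"
    using injective_rmodule_extend[OF Q0 X0 ker_module _ t] by (auto simp: ker_def)
  ultimately have f_on_ker: "\<And>x. x \<in> ker \<Longrightarrow> f x = zeta (s0 x)" by simp
  define \<phi> where "\<phi> x = f x \<ominus>\<^bsub>Q1\<^esub> zeta (s0 x)" for x
  have \<phi>: "\<phi> \<in> rhom R X0 Q1"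
    unfolding \<phi>_def using rhom_diff[OF X0 Q1_module f rhom_comp[OF s0 zeta]] .
  have "\<phi> x = \<zero>\<^bsub>Q1\<^esub>" if "x \<in> carrier X0" "d0 x = \<zero>\<^bsub>X1\<^esub>" for x
    using that f_on_ker[of x] rhom_closed[OF zeta rhom_closed[OF s0]]
    by (simp add: \<phi>_def ker_def Q1.minus_eq Q1.r_neg)
  then obtain h where h: "h \<in> rhom R (X1\<lparr>carrier := d0 ` carrier X0\<rparr>) Q1"
    and h_d0: "\<forall>x \<in> carrier X0. h (d0 x) = \<phi> x"
    using rhom_factors_through_image[OF X0 X1 Q1_module d0 \<phi>] by blast
  have "d0 ` carrier X0 \<subseteq> carrier X1" using d0 by (auto simp: rhom_closed)
  then obtain s1 where s1: "s1 \<in> rhom R X1 Q1" and s1_h: "\<forall>y \<in> d0 ` carrier X0. s1 y = h y"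
    using injective_rmodule_extend[OF Q1 X1 image_right_module[OF X0 X1 d0] _ h] by blast
  have "f x = s1 (d0 x) \<oplus>\<^bsub>Q1\<^esub> zeta (s0 x)" if "x \<in> carrier X0" for x
    using that s1_h h_d0 f s0 zeta
    by (simp add: \<phi>_def rhom_closed Q1.minus_eq Q1.a_assoc Q1.l_neg)
  with s0 s1 show ?thesis by blast
qed

lemma kernel_in_B_if_decomposition:
  fixes X0 :: "('r, 'a) module"
  assumes X0: "right_module R X0" and X1: "right_module R X1" and d0: "d0 \<in> rhom R X0 X1"
    and Q1: "injective_rmodule R Q1 TYPE('a)" and zeta: "zeta \<in> rhom R Q0 Q1"
    and decompose: "\<forall>f \<in> rhom R X0 Q1. \<exists>s0 \<in> rhom R X0 Q0. \<exists>s1 \<in> rhom R X1 Q1.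
       \<forall>x \<in> carrier X0. f x = s1 (d0 x) \<oplus>\<^bsub>Q1\<^esub> zeta (s0 x)"
  shows "in_B R Q0 Q1 zeta (rker_module X0 X1 d0)"
  unfolding in_B_def
proof
  have Q1_module: "right_module R Q1" by (rule injective_rmodule_right_module[OF Q1])
  interpret Q1: abelian_group Q1 by (rule right_module_abelian_group[OF Q1_module])
  define ker where "ker = {x \<in> carrier X0. d0 x = \<zero>\<^bsub>X1\<^esub>}"
  have ker_module: "right_module R (X0\<lparr>carrier := ker\<rparr>)"
    using kernel_right_module[OF X0 X1 d0] by (simp add: rker_module_def ker_def)
  fix g assume "g \<in> rhom R (rker_module X0 X1 d0) Q1"
  then obtain f where f: "f \<in> rhom R X0 Q1" and f_g: "\<forall>x \<in> ker. f x = g x"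
    using injective_rmodule_extend[OF Q1 X0 ker_module] by (auto simp: rker_module_def ker_def)
  then obtain s0 s1 where s0: "s0 \<in> rhom R X0 Q0" and s1: "s1 \<in> rhom R X1 Q1"
    and f_eq: "\<forall>x \<in> carrier X0. f x = s1 (d0 x) \<oplus>\<^bsub>Q1\<^esub> zeta (s0 x)"
    using decompose by blast
  have "s1 \<zero>\<^bsub>X1\<^esub> = \<zero>\<^bsub>Q1\<^esub>"
    using abelian_group_hom.hom_zero[OF rhom_abelian_group_hom[OF X1 Q1_module s1]] .
  then have "zeta (s0 x) = g x" if "x \<in> ker" for x
    using that f_eq f_g rhom_closed[OF zeta rhom_closed[OF s0]]
    by (simp add: ker_def Q1.l_zero)
  moreover have "s0 \<in> rhom R (rker_module X0 X1 d0) Q0"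
    using s0 by (simp add: rker_module_def rhom_restrict)
  ultimately show "\<exists>t \<in> rhom R (rker_module X0 X1 d0) Q0.
      \<forall>x \<in> carrier (rker_module X0 X1 d0). zeta (t x) = g x"
    by (auto simp: rker_module_def ker_def)
qed

theorem lemma2p5:
  fixes R :: "('r, 'e) ring_scheme"
    and X0 :: "('r, 'a) module" and X1 :: "('r, 'b) module"
    and Q0 :: "('r, 'c) module" and Q1 :: "('r, 'd) module"
    and d0 :: "'a \<Rightarrow> 'b" and zeta :: "'c \<Rightarrow> 'd"
  assumes "ring R"
    and "right_module R X0" and "right_module R X1"
    and "d0 \<in> rhom R X0 X1"
    and "injective_rmodule R Q0 TYPE('a)" and "injective_rmodule R Q0 TYPE('b)"
    and "injective_rmodule R Q1 TYPE('a)" and "injective_rmodule R Q1 TYPE('b)"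
    and "zeta \<in> rhom R Q0 Q1"
  shows "in_B R Q0 Q1 zeta (rker_module X0 X1 d0) \<longleftrightarrow>
    (\<forall>f \<in> rhom R X0 Q1. \<exists>s0 \<in> rhom R X0 Q0. \<exists>s1 \<in> rhom R X1 Q1.
       \<forall>x \<in> carrier X0. f x = s1 (d0 x) \<oplus>\<^bsub>Q1\<^esub> zeta (s0 x))"
  using decomposition_if_kernel_in_B[OF assms(2-5,8,9)]
    kernel_in_B_if_decomposition[OF assms(2-4,7,9)]
  by blast

end
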